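(* If $G$ is a graph such that $C_4$ is a condensation of $G$ and $q(G)=2$, then $G$ is a double-ended candle.
   Context: For a graph $G$ on $n$ vertices, $\mathcal{S}(G)$ is the set of real symmetric $n\times n$ matrices $A=[a_{ij}]$ with $a_{ij}\neq0$ for $i\ne j$ iff $\{i,j\}\in E(G)$ (diagonal unrestricted); $q(G)$ is the minimum number of distinct eigenvalues of a matrix in $\mathcal{S}(G)$. A vertex $x$ of $G$ is condensable if $N(x)=\{u,v\}$, $N(u)=N(v)$, and $\deg(u)\geq 3$. $H$ is a condensing of $G$ if $H=G-x$ for some condensable vertex $x$ of $G$; $H$ is a condensation of $G$ if there is a sequence $H=G_1,G_2,\dots,G_k=G$ with each $G_i$ a condensing of $G_{i+1}$. Double-ended candle: for $k\geq 2$, the graph $G_k$ on $\{1,\dots,2k\}$ with levels $L_0=\{1\}$, $L_i=\{2i,2i+1\}$ ($1\le i\le k-1$), $L_k=\{2k\}$, two vertices adjacent iff they lie in consecutive levels. *)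

theory Defs
  imports Complex_Main
begin

type_synonym 'a graph = "'a set \<times> 'a set set"

definition verts :: "'a graph \<Rightarrow> 'a set" where "verts G = fst G"
definition edges :: "'a graph \<Rightarrow> 'a set set" where "edges G = snd G"

definition simple_graph :: "'a graph \<Rightarrow> bool" where
  "simple_graph G \<longleftrightarrow> finite (verts G) \<and>
     (\<forall>e\<in>edges G. \<exists>u v. e = {u, v} \<and> u \<noteq> v \<and> u \<in> verts G \<and> v \<in> verts G)"

definition nbhd :: "'a graph \<Rightarrow> 'a \<Rightarrow> 'a set" where
  "nbhd G x = {y \<in> verts G. {x, y} \<in> edges G}"

definition degree :: "'a graph \<Rightarrow> 'a \<Rightarrow> nat" where
  "degree G x = card (nbhd G x)"

definition SG :: "'a graph \<Rightarrow> ('a \<Rightarrow> 'a \<Rightarrow> real) set" where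
  "SG G = {A. (\<forall>i j. A i j = A j i) \<and>
              (\<forall>i j. (i \<notin> verts G \<or> j \<notin> verts G) \<longrightarrow> A i j = 0) \<and>
              (\<forall>i\<in>verts G. \<forall>j\<in>verts G. i \<noteq> j \<longrightarrow> (A i j \<noteq> 0 \<longleftrightarrow> {i, j} \<in> edges G))}"

definition eigenvalues :: "'a set \<Rightarrow> ('a \<Rightarrow> 'a \<Rightarrow> real) \<Rightarrow> real set" where
  "eigenvalues V A = {mu. \<exists>x :: 'a \<Rightarrow> real. (\<exists>i\<in>V. x i \<noteq> 0) \<and>
       (\<forall>i\<in>V. (\<Sum>j\<in>V. A i j * x j) = mu * x i)}"

definition q :: "'a graph \<Rightarrow> nat" where
  "q G = (LEAST k. \<exists>A\<in>SG G. card (eigenvalues (verts G) A) = k)"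

definition condensable :: "'a graph \<Rightarrow> 'a \<Rightarrow> bool" where
  "condensable G x \<longleftrightarrow> x \<in> verts G \<and> (\<exists>u v. u \<noteq> v \<and> nbhd G x = {u, v} \<and>
      nbhd G u = nbhd G v \<and> degree G u \<ge> 3)"

definition delete_vertex :: "'a graph \<Rightarrow> 'a \<Rightarrow> 'a graph" where
  "delete_vertex G x = (verts G - {x}, {e \<in> edges G. x \<notin> e})"

definition condensing :: "'a graph \<Rightarrow> 'a graph \<Rightarrow> bool" where
  "condensing H G \<longleftrightarrow> (\<exists>x. condensable G x \<and> H = delete_vertex G x)"

definition condensation :: "'a graph \<Rightarrow> 'a graph \<Rightarrow> bool" where
  "condensation H G \<longleftrightarrow> condensing\<^sup>*\<^sup>* H G"

definition graph_iso :: "'a graph \<Rightarrow> 'b graph \<Rightarrow> bool" where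
  "graph_iso G H \<longleftrightarrow> (\<exists>f. bij_betw f (verts G) (verts H) \<and>
     (\<forall>u\<in>verts G. \<forall>v\<in>verts G. {u, v} \<in> edges G \<longleftrightarrow> {f u, f v} \<in> edges H))"

definition cycle4 :: "nat graph" where
  "cycle4 = ({0, 1, 2, 3}, {{0, 1}, {1, 2}, {2, 3}, {3, 0}})"

text \<open>Level of vertex v in the double-ended candle G_k: L_0 = {1}, L_i = {2i, 2i+1}, L_k = {2k}.\<close>
definition candle_level :: "nat \<Rightarrow> nat \<Rightarrow> nat" where
  "candle_level k v = (if v = 1 then 0 else if v = 2 * k then k else v div 2)"

definition candle :: "nat \<Rightarrow> nat graph" where
  "candle k = ({1..2 * k}, {{u, v} | u v. u \<in> {1..2 * k} \<and> v \<in> {1..2 * k} \<and>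
       (candle_level k v = candle_level k u + 1)})"

definition double_ended_candle :: "'a graph \<Rightarrow> bool" where
  "double_ended_candle G \<longleftrightarrow> (\<exists>k \<ge> 2. graph_iso G (candle k))"

end

theory Submission
  imports Defs "HOL-Computational_Algebra.Fundamental_Theorem_Algebra"
begin

text \<open>A matrix \<open>A \<in> S(G)\<close> with exactly two eigenvalues \<open>\<lambda>\<^sub>1, \<lambda>\<^sub>2\<close> satisfies
  \<open>(A - \<lambda>\<^sub>1)(A - \<lambda>\<^sub>2) = 0\<close>, so the rows of two distinct non-adjacent vertices are orthogonal.
  Consequently three pairwise non-adjacent vertices cannot have the same two common neighbours
  \<open>c, d\<close>: restricted to the columns \<open>c, d\<close> their rows would be three pairwise orthogonal vectors
  of \<open>\<real>\<^sup>2\<close> with nonzero entries.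

  Graphs with \<open>C\<^sub>4\<close> as a condensation are connected and triangle-free and have a rigid twin
  structure, since these properties survive the re-insertion of a condensable vertex. Together with
  the orthogonality constraint this yields an end vertex \<open>x\<close> whose neighbours \<open>u, v\<close> are twins,
  and the remaining neighbours of \<open>u\<close> are either a single vertex (then \<open>G = G\<^sub>2\<close>) or two twins
  \<open>a, b\<close>. In the latter case deleting \<open>x\<close> and \<open>u\<close> leaves a graph of the same kind with end vertex
  \<open>v\<close>, and induction on the number of vertices identifies \<open>G\<close> with a double-ended candle.\<close>

section \<open>Symmetric matrices with two eigenvalues\<close>

lemma exists_nontrivial_relation:
  fixes v :: "'k \<Rightarrow> 'a \<Rightarrow> 'f::field"
  assumes "finite V" and "finite K" and "card V < card K"
  shows "\<exists>c. (\<exists>k\<in>K. c k \<noteq> 0) \<and> (\<forall>i\<in>V. (\<Sum>k\<in>K. c k * v k i) = 0)"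
  using assms
proof (induction V arbitrary: K v rule: finite_induct)
  case empty
  then show ?case by (intro exI[of _ "\<lambda>_. 1"]) (auto simp: card_gt_0_iff)
next
  case (insert a W)
  show ?case
  proof (cases "\<forall>k\<in>K. v k a = 0")
    case True
    with insert show ?thesis by auto
  next
    case False
    then obtain k0 where k0: "k0 \<in> K" "v k0 a \<noteq> 0" by auto
    \<comment> \<open>Gaussian elimination: clear coordinate \<open>a\<close> with the pivot \<open>v k0\<close> and recurse on \<open>W\<close>.\<close>
    define K' where "K' = K - {k0}"
    define w where "w k i = v k i - v k a / v k0 a * v k0 i" for k i
    have "finite K'" and "card W < card K'"
      using insert k0 by (simp_all add: K'_def card_Diff_singleton)
    from insert.IH[OF this] obtain c' where
      c': "\<exists>k\<in>K'. c' k \<noteq> 0" "\<forall>i\<in>W. (\<Sum>k\<in>K'. c' k * w k i) = 0" by blast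
    define S where "S = (\<Sum>k\<in>K'. c' k * v k a)"
    define c where "c k = (if k = k0 then - S / v k0 a else c' k)" for k
    have combination: "(\<Sum>k\<in>K. c k * v k i) = (\<Sum>k\<in>K'. c' k * w k i)" for i
    proof -
      have "(\<Sum>k\<in>K. c k * v k i) = c k0 * v k0 i + (\<Sum>k\<in>K'. c' k * v k i)"
        using k0 insert.prems by (simp add: K'_def c_def sum.remove)
      also have "(\<Sum>k\<in>K'. c' k * v k i) = (\<Sum>k\<in>K'. c' k * w k i) + S / v k0 a * v k0 i"
        unfolding w_def S_def
        by (simp add: algebra_simps sum.distrib sum_distrib_left sum_distrib_right sum_subtractf
             sum_divide_distrib)
      finally show ?thesis by (simp add: c_def algebra_simps)
    qed
    show ?thesis
    proof (intro exI[of _ c] conjI ballI)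
      show "\<exists>k\<in>K. c k \<noteq> 0" using c' by (auto simp: c_def K'_def)
      fix i assume "i \<in> insert a W"
      then show "(\<Sum>k\<in>K. c k * v k i) = 0"
        using c' k0 by (auto simp: combination w_def)
    qed
  qed
qed

text \<open>\<open>A\<close> acts on complex vectors, so that polynomials in \<open>A\<close> split into linear factors.\<close>

definition matvec :: "'a set \<Rightarrow> ('a \<Rightarrow> 'a \<Rightarrow> real) \<Rightarrow> ('a \<Rightarrow> complex) \<Rightarrow> 'a \<Rightarrow> complex" where
  "matvec V A y i = (\<Sum>j\<in>V. of_real (A i j) * y j)"

definition poly_matvec ::
    "'a set \<Rightarrow> ('a \<Rightarrow> 'a \<Rightarrow> real) \<Rightarrow> complex poly \<Rightarrow> ('a \<Rightarrow> complex) \<Rightarrow> 'a \<Rightarrow> complex" where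
  "poly_matvec V A p y i = (\<Sum>k\<le>Polynomial.degree p. coeff p k * (matvec V A ^^ k) y i)"

lemma poly_matvec_degree_bound:
  "Polynomial.degree p \<le> M \<Longrightarrow>
     poly_matvec V A p y i = (\<Sum>k\<le>M. coeff p k * (matvec V A ^^ k) y i)"
  unfolding poly_matvec_def by (intro sum.mono_neutral_left) (auto simp: coeff_eq_0)

lemma poly_matvec_add: "poly_matvec V A (p + r) y i = poly_matvec V A p y i + poly_matvec V A r y i"
proof -
  define M where "M = max (Polynomial.degree p) (Polynomial.degree r)"
  have "Polynomial.degree (p + r) \<le> M" unfolding M_def by (rule degree_add_le_max)
  then show ?thesis
    by (simp add: poly_matvec_degree_bound[of _ M] M_def sum.distrib distrib_right)
qed

lemma poly_matvec_smult: "poly_matvec V A (smult c p) y i = c * poly_matvec V A p y i"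
  using degree_smult_le[of c p]
  by (simp add: poly_matvec_degree_bound[of _ "Polynomial.degree p"] sum_distrib_left mult.assoc)

lemma poly_matvec_zero [simp]: "poly_matvec V A 0 y i = 0"
  by (simp add: poly_matvec_def)

lemma poly_matvec_one [simp]: "poly_matvec V A 1 y i = y i"
  by (simp add: poly_matvec_def)

lemma matvec_sum:
  "finite K \<Longrightarrow> matvec V A (\<lambda>j. \<Sum>k\<in>K. f k * g k j) i = (\<Sum>k\<in>K. f k * matvec V A (g k) i)"
  unfolding matvec_def
  by (simp add: sum_distrib_left sum_distrib_right mult.left_commute sum.swap[of _ V])

lemma poly_matvec_pCons:
  "poly_matvec V A (pCons a p) y i = a * y i + matvec V A (poly_matvec V A p y) i"
proof -
  have "poly_matvec V A (pCons a p) y i =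
      (\<Sum>k\<le>Suc (Polynomial.degree p). coeff (pCons a p) k * (matvec V A ^^ k) y i)"
    by (rule poly_matvec_degree_bound) (simp add: degree_pCons_le)
  also have "\<dots> = a * y i + (\<Sum>k\<le>Polynomial.degree p. coeff p k * (matvec V A ^^ Suc k) y i)"
    by (subst sum.atMost_Suc_shift) simp
  also have "\<dots> = a * y i + (\<Sum>k\<le>Polynomial.degree p. coeff p k * matvec V A ((matvec V A ^^ k) y) i)"
    by simp
  also have "\<dots> = a * y i + matvec V A (poly_matvec V A p y) i"
    unfolding poly_matvec_def[abs_def] by (subst matvec_sum) auto
  finally show ?thesis .
qed

lemma poly_matvec_linear: "poly_matvec V A [:-z, 1:] y i = matvec V A y i - z * y i"
  using poly_matvec_pCons[of V A "-z" "[:1:]" y i] poly_matvec_pCons[of V A 1 0 y]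
  by (simp add: one_pCons[symmetric] matvec_def)

lemma poly_matvec_mult: "poly_matvec V A (p * r) y = poly_matvec V A p (poly_matvec V A r y)"
proof (induction p rule: pCons_induct)
  case (pCons a p)
  show ?case
  proof
    fix i
    have "poly_matvec V A (pCons a p * r) y i = poly_matvec V A (smult a r + pCons 0 (p * r)) y i"
      by (simp add: mult_pCons_left)
    also have "\<dots> = a * poly_matvec V A r y i + matvec V A (poly_matvec V A (p * r) y) i"
      by (simp add: poly_matvec_add poly_matvec_smult poly_matvec_pCons)
    also have "\<dots> = poly_matvec V A (pCons a p) (poly_matvec V A r y) i"
      by (simp add: poly_matvec_pCons pCons.IH)
    finally show "poly_matvec V A (pCons a p * r) y i = poly_matvec V A (pCons a p) (poly_matvec V A r y) i" .
  qed
qed (simp add: fun_eq_iff)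

definition cinner :: "'a set \<Rightarrow> ('a \<Rightarrow> complex) \<Rightarrow> ('a \<Rightarrow> complex) \<Rightarrow> complex" where
  "cinner V y w = (\<Sum>i\<in>V. y i * cnj (w i))"

lemma cinner_matvec:
  assumes "\<forall>i j. A i j = A j i"
  shows "cinner V (matvec V A y) w = cinner V y (matvec V A w)"
proof -
  have "cinner V (matvec V A y) w = (\<Sum>i\<in>V. \<Sum>j\<in>V. of_real (A i j) * y j * cnj (w i))"
    unfolding cinner_def matvec_def by (simp add: sum_distrib_right)
  also have "\<dots> = (\<Sum>j\<in>V. \<Sum>i\<in>V. of_real (A i j) * y j * cnj (w i))"
    by (rule sum.swap)
  also have "\<dots> = cinner V y (matvec V A w)"
    unfolding cinner_def matvec_def
    by (simp add: sum_distrib_left cnj_sum assms mult.commute mult.left_commute)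
  finally show ?thesis .
qed

lemma cinner_self_eq_0D:
  assumes "finite V" and "cinner V u u = 0" and "i \<in> V"
  shows "u i = 0"
proof -
  have "cinner V u u = of_real (\<Sum>i\<in>V. (Re (u i))\<^sup>2 + (Im (u i))\<^sup>2)"
    unfolding cinner_def by (simp only: complex_mult_cnj of_real_sum)
  then have "(\<Sum>i\<in>V. (Re (u i))\<^sup>2 + (Im (u i))\<^sup>2) = 0"
    using assms(2) by (metis of_real_eq_0_iff)
  then have "(Re (u i))\<^sup>2 + (Im (u i))\<^sup>2 = 0"
    using assms(1,3) by (subst (asm) sum_nonneg_eq_0_iff) auto
  then show ?thesis by (simp add: complex_eq_iff add_nonneg_eq_0_iff)
qed

lemma cinner_cong:
  "(\<And>i. i \<in> V \<Longrightarrow> u i = u' i) \<Longrightarrow> (\<And>i. i \<in> V \<Longrightarrow> w i = w' i) \<Longrightarrow> cinner V u w = cinner V u' w'"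
  unfolding cinner_def by (intro sum.cong) auto

lemma cinner_poly_matvec_linear:
  assumes "\<forall>i j. A i j = A j i"
  shows "cinner V (poly_matvec V A [:-of_real c, 1:] w) u = cinner V w (poly_matvec V A [:-of_real c, 1:] u)"
proof -
  have "cinner V (poly_matvec V A [:-of_real c, 1:] w) u = cinner V (matvec V A w) u - of_real c * cinner V w u"
    by (simp add: cinner_def poly_matvec_linear algebra_simps sum_subtractf sum_distrib_left)
  also have "\<dots> = cinner V w (matvec V A u) - of_real c * cinner V w u"
    using cinner_matvec[OF assms] by simp
  also have "\<dots> = cinner V w (poly_matvec V A [:-of_real c, 1:] u)"
    by (simp add: cinner_def poly_matvec_linear algebra_simps sum_subtractf sum_distrib_left)
  finally show ?thesis .
qed

lemma symmetric_eigenvalue_real: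
  assumes sym: "\<forall>i j. A i j = A j i" and "finite V"
    and eigen: "\<forall>i\<in>V. matvec V A u i = z * u i" and "i0 \<in> V" "u i0 \<noteq> 0"
  shows "z = of_real (Re z) \<and> Re z \<in> eigenvalues V A"
proof -
  have "cinner V (matvec V A u) u = cinner V (\<lambda>i. z * u i) u"
    using eigen by (intro cinner_cong) auto
  then have "cinner V (matvec V A u) u = z * cinner V u u"
    by (simp add: cinner_def sum_distrib_left mult.assoc)
  moreover have "cinner V u (matvec V A u) = cinner V u (\<lambda>i. z * u i)"
    using eigen by (intro cinner_cong) auto
  then have "cinner V u (matvec V A u) = cnj z * cinner V u u"
    by (simp add: cinner_def sum_distrib_left mult.left_commute)
  moreover have "cinner V u u \<noteq> 0" using cinner_self_eq_0D[OF assms(2) _ assms(4)] assms(5) by blast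
  ultimately have "z = cnj z" using cinner_matvec[OF sym, of V u u] by simp
  then have "Im z = Im (cnj z)" by (rule arg_cong)
  then have Im_z: "Im z = 0" by simp
  have Re_eigen: "(\<Sum>j\<in>V. A i j * Re (u j)) = Re z * Re (u i)" if "i \<in> V" for i
  proof -
    have "Re (matvec V A u i) = Re (z * u i)" using eigen that by simp
    then show ?thesis unfolding matvec_def using Im_z by (simp add: Re_sum)
  qed
  have Im_eigen: "(\<Sum>j\<in>V. A i j * Im (u j)) = Re z * Im (u i)" if "i \<in> V" for i
  proof -
    have "Im (matvec V A u i) = Im (z * u i)" using eigen that by simp
    then show ?thesis unfolding matvec_def using Im_z by (simp add: Im_sum)
  qed
  have "Re (u i0) \<noteq> 0 \<or> Im (u i0) \<noteq> 0" using \<open>u i0 \<noteq> 0\<close> complex_eq_iff by auto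
  then have "Re z \<in> eigenvalues V A"
  proof
    assume "Re (u i0) \<noteq> 0"
    then show ?thesis unfolding eigenvalues_def using Re_eigen \<open>i0 \<in> V\<close>
      by (intro CollectI exI[of _ "\<lambda>j. Re (u j)"]) auto
  next
    assume "Im (u i0) \<noteq> 0"
    then show ?thesis unfolding eigenvalues_def using Im_eigen \<open>i0 \<in> V\<close>
      by (intro CollectI exI[of _ "\<lambda>j. Im (u j)"]) auto
  qed
  with Im_z show ?thesis by (simp add: complex_eq_iff)
qed

lemma poly_matvec_vanishing:
  assumes "\<forall>j\<in>V. y j = 0" and "i \<in> V"
  shows "poly_matvec V A p y i = 0"
proof -
  have "(matvec V A ^^ k) y j = 0" if "j \<in> V" for k j
    using that by (induction k arbitrary: j) (simp_all add: assms(1) matvec_def)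
  then show ?thesis using assms(2) by (simp add: poly_matvec_def)
qed

text \<open>If \<open>(A - z) B y = 0\<close> for \<open>B = (A - l\<^sub>1)(A - l\<^sub>2)\<close> and \<open>B y \<noteq> 0\<close>, then \<open>z\<close> is an
  eigenvalue \<open>\<mu> \<in> {l\<^sub>1, l\<^sub>2}\<close>, so \<open>B y = (A - \<mu>) w\<close> lies both in the range and in the kernel of
  the self-adjoint map \<open>A - \<mu>\<close> and is therefore orthogonal to itself.\<close>
lemma two_eigenvalues_annihilate:
  assumes sym: "\<forall>i j. A i j = A j i" and fin: "finite V"
    and ev: "eigenvalues V A \<subseteq> {l1, l2}"
    and annihilated: "\<forall>i\<in>V. poly_matvec V A (\<Prod>z\<in>#zs. [:-z, 1:]) y i = 0"
  shows "\<forall>i\<in>V. poly_matvec V A ([:-of_real l1, 1:] * [:-of_real l2, 1:]) y i = 0"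
  using annihilated
proof (induction zs arbitrary: y)
  case empty
  then have "\<forall>j\<in>V. y j = 0" by simp
  then show ?case using poly_matvec_vanishing[of V y] by blast
next
  case (add z zs)
  define B where "B = [:-of_real l1, 1:] * [:-of_real l2, (1::complex):]"
  define u where "u = poly_matvec V A B y"
  have "poly_matvec V A (\<Prod>z\<in>#zs. [:-z, 1:]) (poly_matvec V A [:-z, 1:] y) =
      poly_matvec V A (\<Prod>z\<in>#add_mset z zs. [:-z, 1:]) y"
    by (simp add: poly_matvec_mult[symmetric] mult.commute)
  with add have "\<forall>i\<in>V. poly_matvec V A B (poly_matvec V A [:-z, 1:] y) i = 0"
    unfolding B_def by metis
  moreover have "poly_matvec V A B (poly_matvec V A [:-z, 1:] y) = poly_matvec V A [:-z, 1:] u"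
    unfolding u_def by (simp add: poly_matvec_mult[symmetric] mult.commute)
  ultimately have eigen: "\<forall>i\<in>V. matvec V A u i = z * u i"
    by (simp add: poly_matvec_linear)
  show ?case unfolding B_def[symmetric]
  proof (rule ccontr)
    assume "\<not> (\<forall>i\<in>V. poly_matvec V A B y i = 0)"
    then obtain i0 where i0: "i0 \<in> V" "u i0 \<noteq> 0" unfolding u_def by auto
    from symmetric_eigenvalue_real[OF sym fin eigen i0] ev obtain \<mu> \<nu> where
      z: "z = of_real \<mu>" and B: "B = [:-of_real \<mu>, 1:] * [:-of_real \<nu>, 1:]"
      unfolding B_def by (auto simp: mult.commute)
    define w where "w = poly_matvec V A [:-of_real \<nu>, 1:] y"
    have u_range: "u = poly_matvec V A [:-of_real \<mu>, 1:] w"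
      unfolding u_def w_def B poly_matvec_mult ..
    have "cinner V u u = cinner V w (poly_matvec V A [:-of_real \<mu>, 1:] u)"
      by (subst (1) u_range) (rule cinner_poly_matvec_linear[OF sym])
    also have "\<dots> = 0"
      using eigen z by (simp add: cinner_def poly_matvec_linear)
    finally show False using cinner_self_eq_0D[OF fin _ i0(1)] i0(2) by blast
  qed
qed

text \<open>The Krylov vectors \<open>y, Ay, \<dots>, A\<^sup>n y\<close> with \<open>n = |V|\<close> are dependent; factor the relation.\<close>
lemma exists_annihilating_linear_factors:
  assumes fin: "finite V"
  shows "\<exists>zs. \<forall>i\<in>V. poly_matvec V A (\<Prod>z\<in>#zs. [:-z, 1:]) y i = 0"
proof -
  define n where "n = card V"
  have "card V < card {..n}" unfolding n_def by simp
  from exists_nontrivial_relation[OF fin _ this, of "\<lambda>k i. (matvec V A ^^ k) y i"]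
  obtain c :: "nat \<Rightarrow> complex" where
    c: "\<exists>k\<in>{..n}. c k \<noteq> 0" "\<forall>i\<in>V. (\<Sum>k\<in>{..n}. c k * (matvec V A ^^ k) y i) = 0"
    by auto
  define p where "p = (\<Sum>k\<le>n. monom (c k) k)"
  have coeff_p: "coeff p j = (if j \<le> n then c j else 0)" for j
    unfolding p_def by (simp add: coeff_sum coeff_monom)
  have "Polynomial.degree p \<le> n" by (rule degree_le) (simp add: coeff_p)
  then have p_annihilates: "\<forall>i\<in>V. poly_matvec V A p y i = 0"
    using c(2) by (simp add: poly_matvec_degree_bound coeff_p)
  have "p \<noteq> 0" using c(1) coeff_p by (metis atMost_iff coeff_0)
  then have lead: "lead_coeff p \<noteq> 0" by simp
  obtain zs where "p = smult (lead_coeff p) (\<Prod>z\<in>#zs. [:-z, 1:])"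
    using alg_closed_imp_factorization[OF \<open>p \<noteq> 0\<close>] by blast
  then have "\<forall>i\<in>V. lead_coeff p * poly_matvec V A (\<Prod>z\<in>#zs. [:-z, 1:]) y i = 0"
    using p_annihilates by (metis poly_matvec_smult)
  then show ?thesis using lead by auto
qed

lemma symmetric_two_eigenvalues_square:
  assumes sym: "\<forall>i j. A i j = A j i" and fin: "finite V"
    and ev: "eigenvalues V A \<subseteq> {l1, l2}" and "i \<in> V" "j \<in> V"
  shows "(\<Sum>k\<in>V. A i k * A k j) = (l1 + l2) * A i j - (if i = j then l1 * l2 else 0)"
proof -
  define y where "y t = (if t = j then 1 else 0 :: complex)" for t
  obtain zs where "\<forall>i\<in>V. poly_matvec V A (\<Prod>z\<in>#zs. [:-z, 1:]) y i = 0"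
    using exists_annihilating_linear_factors[OF fin] by blast
  from two_eigenvalues_annihilate[OF sym fin ev this] \<open>i \<in> V\<close>
  have "poly_matvec V A [:-of_real l1, 1:] (poly_matvec V A [:-of_real l2, 1:] y) i = 0"
    unfolding poly_matvec_mult by blast
  moreover have Ay: "matvec V A y t = of_real (A t j)" for t
    using \<open>j \<in> V\<close> fin by (simp add: matvec_def y_def if_distrib sum.delta' cong: if_cong)
  then have "poly_matvec V A [:-of_real l2, 1:] y = (\<lambda>t. of_real (A t j) - of_real l2 * y t)"
    by (simp add: fun_eq_iff poly_matvec_linear)
  moreover have "matvec V A (\<lambda>t. of_real (A t j) - of_real l2 * y t) i
      = of_real (\<Sum>k\<in>V. A i k * A k j) - of_real l2 * matvec V A y i"
    unfolding matvec_def by (simp add: algebra_simps sum_subtractf sum_distrib_left)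
  ultimately have "of_real (\<Sum>k\<in>V. A i k * A k j) - of_real l2 * of_real (A i j)
      - of_real l1 * (of_real (A i j) - of_real l2 * y i) = (0 :: complex)"
    by (simp add: poly_matvec_linear Ay)
  then have "(of_real ((\<Sum>k\<in>V. A i k * A k j) - ((l1 + l2) * A i j - (if i = j then l1 * l2 else 0))) :: complex) = 0"
    by (simp add: y_def algebra_simps split: if_splits)
  then show ?thesis by (simp only: of_real_eq_0_iff right_minus_eq)
qed

locale q2_matrix =
  fixes G :: "'a graph" and A :: "'a \<Rightarrow> 'a \<Rightarrow> real"
  assumes simple: "simple_graph G" and in_SG: "A \<in> SG G"
    and square_off_edges: "\<lbrakk>i \<in> verts G; j \<in> verts G; i \<noteq> j; {i, j} \<notin> edges G\<rbrakk> \<Longrightarrow>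
        (\<Sum>k\<in>verts G. A i k * A k j) = 0"

lemma q2_matrix_exists:
  assumes "simple_graph G" and "q G = 2"
  obtains A where "q2_matrix G A"
proof -
  define Adj where
    "Adj i j = (if i \<in> verts G \<and> j \<in> verts G \<and> {i, j} \<in> edges G then 1 else 0 :: real)" for i j
  have "Adj \<in> SG G" unfolding SG_def Adj_def by (auto simp: insert_commute)
  then have "\<exists>k. \<exists>A\<in>SG G. card (eigenvalues (verts G) A) = k" by blast
  from LeastI_ex[OF this] obtain A where A: "A \<in> SG G" "card (eigenvalues (verts G) A) = 2"
    using assms(2) unfolding q_def by auto
  from A(2) obtain l1 l2 where ev: "eigenvalues (verts G) A = {l1, l2}"
    by (auto simp: card_2_iff)
  have fin: "finite (verts G)" using assms(1) by (simp add: simple_graph_def)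
  have sym: "\<forall>i j. A i j = A j i" using A(1) by (simp add: SG_def)
  have "q2_matrix G A"
  proof
    fix i j assume ij: "i \<in> verts G" "j \<in> verts G" "i \<noteq> j" "{i, j} \<notin> edges G"
    then have "A i j = 0" using A(1) by (auto simp: SG_def)
    with symmetric_two_eigenvalues_square[OF sym fin _ ij(1,2), of l1 l2] ev ij(3)
    show "(\<Sum>k\<in>verts G. A i k * A k j) = 0" by simp
  qed (fact assms(1) A(1))+
  then show ?thesis by (rule that)
qed

section \<open>Neighbourhoods and vertex deletion\<close>

lemma nbhd_subset_verts: "nbhd G x \<subseteq> verts G"
  unfolding nbhd_def by auto

lemma finite_verts: "simple_graph G \<Longrightarrow> finite (verts G)"
  unfolding simple_graph_def by auto

lemma finite_nbhd: "simple_graph G \<Longrightarrow> finite (nbhd G x)"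
  using finite_subset[OF nbhd_subset_verts finite_verts] .

lemma simple_graph_edgeD:
  assumes "simple_graph G" and "{a, b} \<in> edges G"
  shows "a \<in> verts G" and "b \<in> verts G" and "a \<noteq> b"
proof -
  obtain u v where "{a, b} = {u, v}" "u \<noteq> v" "u \<in> verts G" "v \<in> verts G"
    using assms unfolding simple_graph_def by blast
  then show "a \<in> verts G" "b \<in> verts G" "a \<noteq> b" by (auto simp: doubleton_eq_iff)
qed

lemma edge_iff_in_nbhd: "simple_graph G \<Longrightarrow> {a, b} \<in> edges G \<longleftrightarrow> b \<in> nbhd G a"
  unfolding nbhd_def using simple_graph_edgeD[of G a b] by auto

lemma nbhd_sym: "simple_graph G \<Longrightarrow> b \<in> nbhd G a \<longleftrightarrow> a \<in> nbhd G b"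
  using edge_iff_in_nbhd[of G a b] edge_iff_in_nbhd[of G b a] by (simp add: insert_commute)

lemma not_in_own_nbhd: "simple_graph G \<Longrightarrow> a \<notin> nbhd G a"
  using edge_iff_in_nbhd[of G a a] simple_graph_edgeD(3)[of G a a] by auto

lemma in_nbhd_imp_verts: "simple_graph G \<Longrightarrow> b \<in> nbhd G a \<Longrightarrow> a \<in> verts G"
  using nbhd_sym[of G b a] nbhd_subset_verts[of G b] by blast

lemma twins_not_adjacent: "simple_graph G \<Longrightarrow> nbhd G a = nbhd G b \<Longrightarrow> b \<notin> nbhd G a"
  using not_in_own_nbhd by metis

lemma verts_delete_vertex: "verts (delete_vertex G x) = verts G - {x}"
  unfolding delete_vertex_def verts_def by simp

lemma nbhd_delete_vertex: "w \<noteq> x \<Longrightarrow> nbhd (delete_vertex G x) w = nbhd G w - {x}"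
  unfolding delete_vertex_def nbhd_def verts_def edges_def by auto

lemma nbhd_delete_vertex_subset: "nbhd (delete_vertex G x) w \<subseteq> nbhd G w"
  unfolding delete_vertex_def nbhd_def verts_def edges_def by auto

lemma simple_graph_delete_vertex: "simple_graph G \<Longrightarrow> simple_graph (delete_vertex G x)"
  unfolding simple_graph_def delete_vertex_def verts_def edges_def by simp fastforce

lemma card_le_2_if_subset_doubleton:
  assumes "A \<subseteq> {a, b}"
  shows "card A \<le> 2"
proof -
  have "card A \<le> card {a, b}" using assms by (intro card_mono) auto
  also have "\<dots> \<le> 2" by (simp add: card_insert_if)
  finally show ?thesis .
qed

lemma eq_doubleton_if_card_le_2:
  "finite B \<Longrightarrow> {w, w'} \<subseteq> B \<Longrightarrow> w \<noteq> w' \<Longrightarrow> card B \<le> 2 \<Longrightarrow> B = {w, w'}"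
  using card_subset_eq[of B "{w, w'}"] card_mono[of B "{w, w'}"] by simp

abbreviation reachable :: "'a graph \<Rightarrow> 'a \<Rightarrow> 'a \<Rightarrow> bool" where
  "reachable G \<equiv> (\<lambda>s t. t \<in> nbhd G s)\<^sup>*\<^sup>*"

definition twin_pair :: "'a graph \<Rightarrow> 'a set \<Rightarrow> bool" where
  "twin_pair G S \<longleftrightarrow> (\<exists>a b. a \<noteq> b \<and> S = {a, b} \<and> nbhd G a = nbhd G b)"

lemma twin_pairI: "a \<noteq> b \<Longrightarrow> nbhd G a = nbhd G b \<Longrightarrow> twin_pair G {a, b}"
  unfolding twin_pair_def by blast

section \<open>Graphs with \<open>C\<^sub>4\<close> as a condensation\<close>

locale C4_condensed =
  fixes G :: "'a graph"
  assumes simple: "simple_graph G"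
    and twin_triple: "\<lbrakk>p \<in> verts G; s \<in> verts G; r \<in> verts G; p \<noteq> s; p \<noteq> r; s \<noteq> r;
        nbhd G s = nbhd G p; nbhd G r = nbhd G p\<rbrakk> \<Longrightarrow> twin_pair G (nbhd G p)"
    and twinless: "\<lbrakk>p \<in> verts G; \<forall>s\<in>verts G. s \<noteq> p \<longrightarrow> nbhd G s \<noteq> nbhd G p\<rbrakk>
        \<Longrightarrow> twin_pair G (nbhd G p)"
    and common_nbhd_card_le_2: "\<lbrakk>p \<in> verts G; s \<in> verts G; p \<noteq> s; s \<notin> nbhd G p;
        nbhd G p \<noteq> nbhd G s\<rbrakk> \<Longrightarrow> card (nbhd G p \<inter> nbhd G s) \<le> 2"
    and triangle_free: "\<lbrakk>b \<in> nbhd G a; c \<in> nbhd G b\<rbrakk> \<Longrightarrow> c \<notin> nbhd G a"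
    and degree_ge_2: "p \<in> verts G \<Longrightarrow> 2 \<le> card (nbhd G p)"
    and connected: "\<lbrakk>a \<in> verts G; b \<in> verts G\<rbrakk> \<Longrightarrow> reachable G a b"
    and twin_pair_vertex: "\<exists>x\<in>verts G. twin_pair G (nbhd G x)"

lemma C4_condensed_4cycle:
  assumes simple: "simple_graph G" and V: "verts G = {p0, p1, p2, p3}"
    and distinct: "distinct [p0, p1, p2, p3]"
    and N: "nbhd G p0 = {p1, p3}" "nbhd G p1 = {p0, p2}" "nbhd G p2 = {p1, p3}" "nbhd G p3 = {p0, p2}"
  shows "C4_condensed G"
proof
  have pair: "twin_pair G (nbhd G p)" if "p \<in> verts G" for p
    using that distinct N unfolding V by (auto intro!: twin_pairI)
  then show "twin_pair G (nbhd G p)" if "p \<in> verts G" for p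
    using that by blast
  show "twin_pair G (nbhd G p)" if "p \<in> verts G" for p
    using pair that by blast
  show "card (nbhd G p \<inter> nbhd G s) \<le> 2" if "p \<in> verts G" for p s
    using that N unfolding V by (auto intro: card_le_2_if_subset_doubleton)
  have cross: "b \<in> {p0, p2} \<longleftrightarrow> a \<notin> {p0, p2}" if "b \<in> nbhd G a" for a b
  proof -
    have "a \<in> {p0, p1, p2, p3}" using in_nbhd_imp_verts[OF simple that] V by simp
    then show ?thesis using that N distinct by (elim insertE emptyE) auto
  qed
  show "c \<notin> nbhd G a" if "b \<in> nbhd G a" "c \<in> nbhd G b" for a b c
    using cross[OF that(1)] cross[OF that(2)] cross[of c a] by blast
  show "2 \<le> card (nbhd G p)" if "p \<in> verts G" for p
    using that distinct N unfolding V by (elim insertE emptyE) simp_all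
  have "reachable G p0 p1" "reachable G p1 p2" "reachable G p0 p3"
    and "reachable G p1 p0" "reachable G p2 p1" "reachable G p3 p0"
    using N by auto
  moreover from this have "reachable G p0 p2" "reachable G p2 p0"
    by (meson rtranclp_trans)+
  ultimately have "reachable G p0 p \<and> reachable G p p0" if "p \<in> verts G" for p
    using that unfolding V by auto
  then show "reachable G a b" if "a \<in> verts G" "b \<in> verts G" for a b
    using that by (meson rtranclp_trans)
  show "\<exists>x\<in>verts G. twin_pair G (nbhd G x)"
    using pair V by blast
qed (rule simple)

lemma cycle4_edge_iff:
  "{i, j} \<in> edges cycle4 \<longleftrightarrow>
     (i, j) \<in> {(0, 1), (1, 0), (1, 2), (2, 1), (2, 3), (3, 2), (3, 0), (0, 3)}"
  by (auto simp: cycle4_def edges_def doubleton_eq_iff)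

lemma verts_cycle4: "verts cycle4 = {0, 1, 2, 3}"
  by (simp add: cycle4_def verts_def)

lemma graph_iso_cycle4E:
  assumes iso: "graph_iso H cycle4"
  obtains p0 p1 p2 p3 where "verts H = {p0, p1, p2, p3}" and "distinct [p0, p1, p2, p3]"
    and "nbhd H p0 = {p1, p3}" "nbhd H p1 = {p0, p2}" "nbhd H p2 = {p1, p3}" "nbhd H p3 = {p0, p2}"
proof -
  obtain f where bij: "bij_betw f (verts H) {0, 1, 2, 3}"
    and edge: "\<forall>a\<in>verts H. \<forall>b\<in>verts H. {a, b} \<in> edges H \<longleftrightarrow> {f a, f b} \<in> edges cycle4"
    using iso unfolding graph_iso_def verts_cycle4 by blast
  have image: "f ` verts H = {0, 1, 2, 3}"
    using bij by (simp add: bij_betw_def)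
  then have "\<exists>p\<in>verts H. f p = i" if "i \<in> {0, 1, 2, 3}" for i
    using that by (metis imageE)
  then obtain p0 p1 p2 p3 where p: "p0 \<in> verts H" "p1 \<in> verts H" "p2 \<in> verts H" "p3 \<in> verts H"
    and f: "f p0 = 0" "f p1 = 1" "f p2 = 2" "f p3 = 3"
    by (meson insertCI)
  have inj: "inj_on f (verts H)" using bij by (simp add: bij_betw_def)
  have V: "verts H = {p0, p1, p2, p3}"
  proof (intro equalityI subsetI)
    fix w assume w: "w \<in> verts H"
    have "f w \<in> {0, 1, 2, 3}" using imageI[OF w, of f] image by simp
    then have "f w \<in> f ` {p0, p1, p2, p3}" using f by simp
    then show "w \<in> {p0, p1, p2, p3}" using inj_on_image_mem_iff[OF inj w] p by blast
  qed (use p in blast)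
  have nbhd_f: "nbhd H w = {t \<in> verts H. {f w, f t} \<in> edges cycle4}" if "w \<in> verts H" for w
    unfolding nbhd_def using edge that by blast
  show thesis
  proof (rule that[OF V])
    show "distinct [p0, p1, p2, p3]" using f by auto
    show "nbhd H p0 = {p1, p3}" "nbhd H p1 = {p0, p2}" "nbhd H p2 = {p1, p3}" "nbhd H p3 = {p0, p2}"
      using p f by (auto simp: nbhd_f V cycle4_edge_iff)
  qed
qed

locale condensing_step = H: C4_condensed "delete_vertex G x" for G :: "'a graph" and x +
  fixes u v
  assumes simple: "simple_graph G" and x_vert: "x \<in> verts G" and u_ne_v: "u \<noteq> v"
    and nbhd_x: "nbhd G x = {u, v}" and twins_uv: "nbhd G u = nbhd G v"
begin

abbreviation "H \<equiv> delete_vertex G x"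

lemma x_in_nbhd_iff: "x \<in> nbhd G w \<longleftrightarrow> w \<in> {u, v}"
  using nbhd_sym[OF simple, of x w] nbhd_x by simp

lemma u_v_verts: "u \<in> verts H" "v \<in> verts H"
  using nbhd_x nbhd_subset_verts[of G x] not_in_own_nbhd[OF simple, of x]
  by (auto simp: verts_delete_vertex)

lemma x_not_in_nbhd_H: "x \<notin> nbhd H w"
  using nbhd_subset_verts[of H w] by (auto simp: verts_delete_vertex)

lemma nbhd_G_eq: "w \<noteq> x \<Longrightarrow> nbhd G w = (if w \<in> {u, v} then insert x (nbhd H w) else nbhd H w)"
  using nbhd_delete_vertex[of w x G] x_in_nbhd_iff[of w] by auto

lemma twins_H_uv: "nbhd H u = nbhd H v"
  using twins_uv u_v_verts by (simp add: nbhd_delete_vertex verts_delete_vertex)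

lemma twins_iff:
  "p \<noteq> x \<Longrightarrow> s \<noteq> x \<Longrightarrow>
     nbhd G p = nbhd G s \<longleftrightarrow> nbhd H p = nbhd H s \<and> (p \<in> {u, v} \<longleftrightarrow> s \<in> {u, v})"
  using nbhd_G_eq[of p] nbhd_G_eq[of s] x_not_in_nbhd_H[of p] x_not_in_nbhd_H[of s]
  by (auto simp: insert_ident)

text \<open>A vertex adjacent to one of \<open>u, v\<close> is adjacent to both, so the twins \<open>a, b\<close> of \<open>H\<close>
  lie on the same side of \<open>{u, v}\<close> and stay twins in \<open>G\<close>.\<close>
lemma twin_pair_lift:
  assumes "p \<in> verts G" "p \<noteq> x" "p \<notin> {u, v}" and "twin_pair H (nbhd H p)"
  shows "twin_pair G (nbhd G p)"
proof -
  obtain a b where ab: "a \<noteq> b" "nbhd H p = {a, b}" "nbhd H a = nbhd H b"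
    using assms(4) unfolding twin_pair_def by blast
  have Np: "nbhd G p = {a, b}" using nbhd_G_eq[of p] assms ab by simp
  have abx: "a \<noteq> x" "b \<noteq> x" using ab(2) x_not_in_nbhd_H by blast+
  have "{a, b} = {u, v}" if "c \<in> {a, b}" "c \<in> {u, v}" for c
  proof -
    have "p \<in> nbhd G u" "p \<in> nbhd G v"
      using that Np nbhd_sym[OF simple, of p c] twins_uv by auto
    then have "u \<in> {a, b}" "v \<in> {a, b}" using Np nbhd_sym[OF simple, of p] by auto
    then show ?thesis using u_ne_v by auto
  qed
  then have "a \<in> {u, v} \<longleftrightarrow> b \<in> {u, v}" by blast
  then have "nbhd G a = nbhd G b" using twins_iff[OF abx] ab(3) by simp
  then show ?thesis using Np ab(1) by (simp add: twin_pairI)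
qed

lemma twin_triple:
  assumes V: "p \<in> verts G" "s \<in> verts G" "r \<in> verts G" and distinct: "p \<noteq> s" "p \<noteq> r" "s \<noteq> r"
    and twins: "nbhd G s = nbhd G p" "nbhd G r = nbhd G p"
  shows "twin_pair G (nbhd G p)"
proof (cases "x \<in> {p, s, r}")
  case True
  then have "nbhd G p = {u, v}" using twins nbhd_x by auto
  then show ?thesis using u_ne_v twins_uv by (simp add: twin_pairI)
next
  case False
  have "p \<notin> {u, v}"
  proof
    assume "p \<in> {u, v}"
    then have "s \<in> {u, v}" "r \<in> {u, v}" using twins x_in_nbhd_iff by blast+
    with \<open>p \<in> {u, v}\<close> distinct show False by auto
  qed
  with twins False have "nbhd H s = nbhd H p" "nbhd H r = nbhd H p"
    using twins_iff[of s p] twins_iff[of r p] by auto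
  with V False distinct have "twin_pair H (nbhd H p)"
    by (intro H.twin_triple[of p s r]) (auto simp: verts_delete_vertex)
  with V False \<open>p \<notin> {u, v}\<close> show ?thesis by (intro twin_pair_lift) auto
qed

lemma twinless:
  assumes p: "p \<in> verts G" and no_twin: "\<forall>s\<in>verts G. s \<noteq> p \<longrightarrow> nbhd G s \<noteq> nbhd G p"
  shows "twin_pair G (nbhd G p)"
proof (cases "p = x")
  case True
  then show ?thesis using nbhd_x u_ne_v twins_uv by (simp add: twin_pairI)
next
  case False
  have "p \<notin> {u, v}" using no_twin u_v_verts u_ne_v twins_uv by (auto simp: verts_delete_vertex)
  have pH: "p \<in> verts H" using p False by (simp add: verts_delete_vertex)
  have "twin_pair H (nbhd H p)"
  proof (cases "\<exists>s\<in>verts H. s \<noteq> p \<and> nbhd H s = nbhd H p")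
    case True
    then obtain s where s: "s \<in> verts H" "s \<noteq> p" "nbhd H s = nbhd H p" by blast
    have "s \<in> {u, v}"
    proof (rule ccontr)
      assume "s \<notin> {u, v}"
      then have "nbhd G s = nbhd G p"
        using twins_iff[of s p] s False \<open>p \<notin> {u, v}\<close> by (auto simp: verts_delete_vertex)
      then show False using no_twin s by (auto simp: verts_delete_vertex)
    qed
    then have "nbhd H u = nbhd H p" "nbhd H v = nbhd H p" using s(3) twins_H_uv by auto
    then show ?thesis
      using H.twin_triple[OF pH u_v_verts] \<open>p \<notin> {u, v}\<close> u_ne_v by auto
  next
    case False
    then show ?thesis using H.twinless[OF pH] by blast
  qed
  then show ?thesis using twin_pair_lift p False \<open>p \<notin> {u, v}\<close> by blast
qed

lemma common_nbhd_card_le_2: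
  assumes p: "p \<in> verts G" and s: "s \<in> verts G"
    and "p \<noteq> s" "s \<notin> nbhd G p" "nbhd G p \<noteq> nbhd G s"
  shows "card (nbhd G p \<inter> nbhd G s) \<le> 2"
proof (cases "x \<in> {p, s}")
  case True
  then have "nbhd G p \<inter> nbhd G s \<subseteq> {u, v}" using nbhd_x by auto
  then show ?thesis by (rule card_le_2_if_subset_doubleton)
next
  case False
  have pH: "p \<in> verts H" "s \<in> verts H" using p s False by (auto simp: verts_delete_vertex)
  have "\<not> (p \<in> {u, v} \<and> s \<in> {u, v})" using assms(5) twins_uv by auto
  then have inter: "nbhd G p \<inter> nbhd G s = nbhd H p \<inter> nbhd H s"
    using nbhd_G_eq[of p] nbhd_G_eq[of s] False x_not_in_nbhd_H by (auto split: if_splits)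
  show ?thesis
  proof (cases "nbhd H p = nbhd H s")
    case False
    have "s \<notin> nbhd H p" using assms(4) nbhd_delete_vertex_subset[of G x p] by blast
    then show ?thesis using H.common_nbhd_card_le_2[OF pH \<open>p \<noteq> s\<close>] False inter by simp
  next
    case True
    \<comment> \<open>exactly one of \<open>p, s\<close> lies in \<open>{u, v}\<close>; the other one is a third twin of \<open>u, v\<close> in \<open>H\<close>\<close>
    with twins_iff[of p s] False assms(5) have "(p \<in> {u, v}) \<noteq> (s \<in> {u, v})" by blast
    then obtain t where t: "t \<in> verts H" "t \<notin> {u, v}" "nbhd H u = nbhd H t" "nbhd H v = nbhd H t"
      and Nt: "nbhd H t = nbhd H p" using pH True twins_H_uv by auto
    have "twin_pair H (nbhd H t)"
      using H.twin_triple[OF t(1) u_v_verts] t u_ne_v by auto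
    then obtain a b where "nbhd H t = {a, b}" unfolding twin_pair_def by blast
    then show ?thesis using inter True Nt by (auto intro: card_le_2_if_subset_doubleton)
  qed
qed

lemma triangle_free:
  assumes ab: "b \<in> nbhd G a" and bc: "c \<in> nbhd G b"
  shows "c \<notin> nbhd G a"
proof
  assume ac: "c \<in> nbhd G a"
  have x_nbrs_independent: "z \<notin> nbhd G y" if "y \<in> nbhd G x" "z \<in> nbhd G x" for y z
    using that nbhd_x twins_not_adjacent[OF simple twins_uv] twins_not_adjacent[OF simple twins_uv[symmetric]]
      not_in_own_nbhd[OF simple] by auto
  have sym: "a \<in> nbhd G b" "b \<in> nbhd G c" "a \<in> nbhd G c"
    using ab bc ac nbhd_sym[OF simple] by blast+
  show False
  proof (cases "x \<in> {a, b, c}")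
    case True
    then consider "a = x" | "b = x" | "c = x" by blast
    then show False
      by cases (use x_nbrs_independent ab bc ac sym in blast)+
  next
    case False
    then have "a \<noteq> x" "b \<noteq> x" by auto
    then have "b \<in> nbhd H a" "c \<in> nbhd H b" "c \<in> nbhd H a"
      using ab bc ac False by (auto simp: nbhd_delete_vertex)
    then show False using H.triangle_free by blast
  qed
qed

lemma degree_ge_2:
  assumes "p \<in> verts G"
  shows "2 \<le> card (nbhd G p)"
proof (cases "p = x")
  case True
  then show ?thesis using nbhd_x u_ne_v by simp
next
  case False
  then have "2 \<le> card (nbhd H p)" using H.degree_ge_2 assms by (simp add: verts_delete_vertex)
  also have "\<dots> \<le> card (nbhd G p)"
    using card_mono[OF finite_nbhd[OF simple] nbhd_delete_vertex_subset] .
  finally show ?thesis .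
qed

lemma reachable_u:
  assumes "a \<in> verts G"
  shows "reachable G a u \<and> reachable G u a"
proof (cases "a = x")
  case True
  then show ?thesis using nbhd_x x_in_nbhd_iff[of u] by auto
next
  case False
  have "reachable H \<le> reachable G"
    by (rule rtranclp_mono) (use nbhd_delete_vertex_subset[of G x] in blast)
  moreover have "a \<in> verts H" using assms False by (simp add: verts_delete_vertex)
  ultimately show ?thesis using H.connected u_v_verts(1) by blast
qed

lemma C4_condensed: "C4_condensed G"
proof
  have "twin_pair G (nbhd G x)"
    unfolding nbhd_x by (rule twin_pairI[OF u_ne_v twins_uv])
  then show "\<exists>x\<in>verts G. twin_pair G (nbhd G x)" using x_vert by blast
  show "reachable G a b" if "a \<in> verts G" "b \<in> verts G" for a b
    using reachable_u that by (meson rtranclp_trans)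
qed (fact simple twin_triple twinless common_nbhd_card_le_2 triangle_free degree_ge_2)+

end

lemma C4_condensed_if_condensation:
  assumes "condensation H G" and "graph_iso H cycle4" and "simple_graph G"
  shows "C4_condensed G"
proof -
  have "condensing\<^sup>*\<^sup>* H G" using assms(1) unfolding condensation_def .
  then show ?thesis using assms(3)
  proof (induction rule: rtranclp_induct)
    case base
    obtain p0 p1 p2 p3 where "verts H = {p0, p1, p2, p3}" "distinct [p0, p1, p2, p3]"
      "nbhd H p0 = {p1, p3}" "nbhd H p1 = {p0, p2}" "nbhd H p2 = {p1, p3}" "nbhd H p3 = {p0, p2}"
      using graph_iso_cycle4E[OF assms(2)] .
    then show ?case by (rule C4_condensed_4cycle[OF base])
  next
    case (step G' G)
    from step.hyps(2) obtain x u v where x: "x \<in> verts G" "u \<noteq> v" "nbhd G x = {u, v}"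
      "nbhd G u = nbhd G v" and G': "G' = delete_vertex G x"
      unfolding condensing_def condensable_def by blast
    have "C4_condensed G'"
      using step.IH simple_graph_delete_vertex[OF step.prems] G' by simp
    then have "condensing_step G x u v"
      using step.prems x G' by (intro condensing_step.intro condensing_step_axioms.intro) simp_all
    then show ?case by (rule condensing_step.C4_condensed)
  qed
qed

section \<open>Consequences of \<open>q(G) = 2\<close>\<close>

lemma not_three_pairwise_orthogonal:
  fixes x1 y1 x2 y2 x3 y3 :: real
  assumes "x1 \<noteq> 0" "y2 \<noteq> 0" "y3 \<noteq> 0"
    and o12: "x1 * x2 + y1 * y2 = 0" and o13: "x1 * x3 + y1 * y3 = 0" and o23: "x2 * x3 + y2 * y3 = 0"
  shows False
proof -
  have "x1 * x2 = - (y1 * y2)" "x1 * x3 = - (y1 * y3)" using o12 o13 by linarith+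
  have "(y2 * y3) * (y1 * y1 + x1 * x1) = (y1 * y2) * (y1 * y3) + x1 * x1 * y2 * y3"
    by (simp add: algebra_simps)
  also have "\<dots> = (x1 * x2) * (x1 * x3) + x1 * x1 * y2 * y3"
    by (simp only: \<open>x1 * x2 = - (y1 * y2)\<close> \<open>x1 * x3 = - (y1 * y3)\<close>) simp
  also have "\<dots> = x1 * x1 * (x2 * x3 + y2 * y3)"
    by (simp add: algebra_simps)
  finally have "(y2 * y3) * (y1 * y1 + x1 * x1) = 0"
    using o23 by simp
  moreover have "y1 * y1 + x1 * x1 > 0"
    using assms(1) by (simp add: sum_squares_gt_zero_iff)
  ultimately show False using assms(2,3) by simp
qed

context q2_matrix
begin

lemma symmetric: "A i j = A j i"
  using in_SG by (simp add: SG_def)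

lemma entry_eq_0_iff:
  "i \<in> verts G \<Longrightarrow> j \<in> verts G \<Longrightarrow> i \<noteq> j \<Longrightarrow> A i j = 0 \<longleftrightarrow> j \<notin> nbhd G i"
  using in_SG edge_iff_in_nbhd[OF simple, of i j] by (auto simp: SG_def)

lemma entry_nonzero_if_adjacent: "c \<in> nbhd G p \<Longrightarrow> A p c \<noteq> 0"
  using entry_eq_0_iff[of p c] in_nbhd_imp_verts[OF simple, of c p] nbhd_subset_verts[of G p]
    not_in_own_nbhd[OF simple, of p] by auto

lemma common_pair_orthogonal:
  assumes p: "p \<in> verts G" and s: "s \<in> verts G" and "p \<noteq> s" "s \<notin> nbhd G p"
    and common: "nbhd G p \<inter> nbhd G s = {c, d}" and "c \<noteq> d"
  shows "A p c * A s c + A p d * A s d = 0"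
proof -
  have "{p, s} \<notin> edges G" using edge_iff_in_nbhd[OF simple] assms(4) by blast
  then have "(\<Sum>k\<in>verts G. A p k * A k s) = 0" using square_off_edges p s \<open>p \<noteq> s\<close> by blast
  moreover have "(\<Sum>k\<in>{c, d}. A p k * A k s) = (\<Sum>k\<in>verts G. A p k * A k s)"
  proof (rule sum.mono_neutral_left)
    show "finite (verts G)" using finite_verts[OF simple] .
    show "{c, d} \<subseteq> verts G" using common nbhd_subset_verts[of G p] by blast
    show "\<forall>k\<in>verts G - {c, d}. A p k * A k s = 0"
    proof
      fix k assume k: "k \<in> verts G - {c, d}"
      show "A p k * A k s = 0"
      proof (cases "k \<in> {p, s}")
        case True
        then show ?thesis using entry_eq_0_iff[OF p s \<open>p \<noteq> s\<close>] assms(4) symmetric[of s p] by auto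
      next
        case False
        have "k \<notin> nbhd G p \<or> k \<notin> nbhd G s" using k common by blast
        then have "A p k = 0 \<or> A s k = 0" using entry_eq_0_iff p s k False by auto
        then show ?thesis using symmetric[of k s] by auto
      qed
    qed
  qed
  ultimately show ?thesis using \<open>c \<noteq> d\<close> symmetric[of c s] symmetric[of d s] by simp
qed

text \<open>The rows of three such vertices, restricted to the columns \<open>c, d\<close>, would be three pairwise
  orthogonal vectors in the plane with nonzero entries.\<close>
lemma no_common_pair_triple:
  assumes V: "p \<in> verts G" "s \<in> verts G" "r \<in> verts G" and "p \<noteq> s" "p \<noteq> r" "s \<noteq> r"
    and "s \<notin> nbhd G p" "r \<notin> nbhd G p" "r \<notin> nbhd G s" and "c \<noteq> d"
    and ps: "nbhd G p \<inter> nbhd G s = {c, d}" and pr: "nbhd G p \<inter> nbhd G r = {c, d}"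
    and sr: "nbhd G s \<inter> nbhd G r = {c, d}"
  shows False
proof (rule not_three_pairwise_orthogonal)
  show "A p c * A s c + A p d * A s d = 0"
    by (rule common_pair_orthogonal[OF V(1,2) \<open>p \<noteq> s\<close> \<open>s \<notin> nbhd G p\<close> ps \<open>c \<noteq> d\<close>])
  show "A p c * A r c + A p d * A r d = 0"
    by (rule common_pair_orthogonal[OF V(1,3) \<open>p \<noteq> r\<close> \<open>r \<notin> nbhd G p\<close> pr \<open>c \<noteq> d\<close>])
  show "A s c * A r c + A s d * A r d = 0"
    by (rule common_pair_orthogonal[OF V(2,3) \<open>s \<noteq> r\<close> \<open>r \<notin> nbhd G s\<close> sr \<open>c \<noteq> d\<close>])
  have "c \<in> nbhd G p" "d \<in> nbhd G s" "d \<in> nbhd G r" using ps pr sr by blast+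
  then show "A p c \<noteq> 0" "A s d \<noteq> 0" "A r d \<noteq> 0" by (simp_all add: entry_nonzero_if_adjacent)
qed

end

text \<open>The invariant of the induction below; \<open>x\<close> is the vertex that becomes the end vertex \<open>1\<close> of the candle.\<close>

locale candle_like =
  fixes G :: "'a graph" and x :: 'a
  assumes simple: "simple_graph G" and x_vert: "x \<in> verts G"
    and x_twin_pair: "twin_pair G (nbhd G x)"
    and no_twin_triple: "\<lbrakk>p \<in> verts G; s \<in> verts G; r \<in> verts G; p \<noteq> s; p \<noteq> r; s \<noteq> r;
        nbhd G s = nbhd G p; nbhd G r = nbhd G p\<rbrakk> \<Longrightarrow> False"
    and no_three_nbhd_classes: "\<lbrakk>p \<in> nbhd G w; s \<in> nbhd G w; r \<in> nbhd G w;
        nbhd G p \<noteq> nbhd G s; nbhd G p \<noteq> nbhd G r; nbhd G s \<noteq> nbhd G r\<rbrakk> \<Longrightarrow> False"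
    and twinless_degree_2: "\<lbrakk>p \<in> verts G; \<forall>s\<in>verts G. s \<noteq> p \<longrightarrow> nbhd G s \<noteq> nbhd G p\<rbrakk>
        \<Longrightarrow> card (nbhd G p) = 2"
    and degree_ge_2: "p \<in> verts G \<Longrightarrow> 2 \<le> card (nbhd G p)"
    and no_common_pair_triple: "\<lbrakk>p \<in> verts G; s \<in> verts G; r \<in> verts G; p \<noteq> s; p \<noteq> r; s \<noteq> r;
        s \<notin> nbhd G p; r \<notin> nbhd G p; r \<notin> nbhd G s; c \<noteq> d; nbhd G p \<inter> nbhd G s = {c, d};
        nbhd G p \<inter> nbhd G r = {c, d}; nbhd G s \<inter> nbhd G r = {c, d}\<rbrakk> \<Longrightarrow> False"
    and reachable_from_x: "b \<in> verts G \<Longrightarrow> reachable G x b"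

locale C4_condensed_q2 = C4_condensed G + q2_matrix G A for G A
begin

lemma no_twin_triple:
  assumes V: "p \<in> verts G" "s \<in> verts G" "r \<in> verts G" and "p \<noteq> s" "p \<noteq> r" "s \<noteq> r"
    and twins: "nbhd G s = nbhd G p" "nbhd G r = nbhd G p"
  shows False
proof -
  obtain a b where "a \<noteq> b" "nbhd G p = {a, b}"
    using twin_triple[OF assms] unfolding twin_pair_def by blast
  moreover have "s \<notin> nbhd G p" "r \<notin> nbhd G p" "r \<notin> nbhd G s"
    using twins twins_not_adjacent[OF simple] by metis+
  ultimately show False
    using no_common_pair_triple[OF V \<open>p \<noteq> s\<close> \<open>p \<noteq> r\<close> \<open>s \<noteq> r\<close>, of a b] twins by simp
qed

lemma no_three_nbhd_classes:
  assumes N: "p \<in> nbhd G w" "s \<in> nbhd G w" "r \<in> nbhd G w"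
    and classes: "nbhd G p \<noteq> nbhd G s" "nbhd G p \<noteq> nbhd G r" "nbhd G s \<noteq> nbhd G r"
  shows False
proof (cases "\<exists>w'\<in>verts G. w' \<noteq> w \<and> nbhd G w' = nbhd G w")
  case True
  \<comment> \<open>\<open>p, s, r\<close> are pairwise non-adjacent and share exactly the twins \<open>w, w'\<close>\<close>
  then obtain w' where w': "w' \<in> verts G" "w' \<noteq> w" "nbhd G w' = nbhd G w" by blast
  have V: "p \<in> verts G" "s \<in> verts G" "r \<in> verts G"
    using N nbhd_subset_verts[of G w] by blast+
  have distinct: "p \<noteq> s" "p \<noteq> r" "s \<noteq> r" using classes by auto
  have indep: "s \<notin> nbhd G p" "r \<notin> nbhd G p" "r \<notin> nbhd G s"
    using N triangle_free nbhd_sym[OF simple] by metis+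
  have common: "nbhd G t1 \<inter> nbhd G t2 = {w, w'}"
    if "t1 \<in> nbhd G w" "t2 \<in> nbhd G w" "t1 \<noteq> t2" "t2 \<notin> nbhd G t1" "nbhd G t1 \<noteq> nbhd G t2"
    for t1 t2
  proof (rule eq_doubleton_if_card_le_2)
    show "finite (nbhd G t1 \<inter> nbhd G t2)" using finite_nbhd[OF simple] by blast
    show "{w, w'} \<subseteq> nbhd G t1 \<inter> nbhd G t2"
      using that(1,2) w'(3) nbhd_sym[OF simple] by blast
    show "w \<noteq> w'" using w'(2) by simp
    show "card (nbhd G t1 \<inter> nbhd G t2) \<le> 2"
      using common_nbhd_card_le_2 that nbhd_subset_verts[of G w] by blast
  qed
  show False
    using no_common_pair_triple[OF V distinct indep w'(2)[symmetric]]
      common[of p s] common[of p r] common[of s r] N distinct indep classes by blast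
next
  case False
  have "w \<in> verts G" using N(1) in_nbhd_imp_verts[OF simple] by blast
  then obtain a b where "nbhd G w = {a, b}" using twinless False unfolding twin_pair_def by blast
  then show False using N classes by auto
qed

lemma candle_like_exists: "\<exists>x. candle_like G x"
proof -
  obtain x where x: "x \<in> verts G" "twin_pair G (nbhd G x)" using twin_pair_vertex by blast
  have "candle_like G x"
  proof
    show "card (nbhd G p) = 2"
      if "p \<in> verts G" "\<forall>s\<in>verts G. s \<noteq> p \<longrightarrow> nbhd G s \<noteq> nbhd G p" for p
      using twinless[OF that] by (auto simp: twin_pair_def)
    show "reachable G x b" if "b \<in> verts G" for b
      using connected[OF x(1) that] .
  qed (fact simple x no_twin_triple no_three_nbhd_classes degree_ge_2 no_common_pair_triple)+
  then show ?thesis by blast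
qed

end

section \<open>Recognising the double-ended candle\<close>

definition candle_map :: "'a graph \<Rightarrow> nat \<Rightarrow> ('a \<Rightarrow> nat) \<Rightarrow> bool" where
  "candle_map G k f \<longleftrightarrow> bij_betw f (verts G) {1..2 * k} \<and>
     (\<forall>p\<in>verts G. \<forall>r\<in>verts G. {p, r} \<in> edges G \<longleftrightarrow> {f p, f r} \<in> edges (candle k))"

lemma verts_candle: "verts (candle k) = {1..2 * k}"
  by (simp add: candle_def verts_def)

lemma graph_iso_candle: "candle_map G k f \<Longrightarrow> graph_iso G (candle k)"
  unfolding candle_map_def graph_iso_def verts_candle by blast

lemma candle_edge_iff:
  "{i, j} \<in> edges (candle k) \<longleftrightarrow> i \<in> {1..2 * k} \<and> j \<in> {1..2 * k} \<and>
     (candle_level k j = candle_level k i + 1 \<or> candle_level k i = candle_level k j + 1)"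
  unfolding candle_def edges_def by (auto simp: doubleton_eq_iff)

lemma candle_edge_1: "k \<ge> 2 \<Longrightarrow> j \<in> {1..2 * k} \<Longrightarrow> {1, j} \<in> edges (candle k) \<longleftrightarrow> j \<in> {2, 3}"
  unfolding candle_edge_iff candle_level_def by auto

lemma candle_edge_2: "k \<ge> 3 \<Longrightarrow> j \<in> {1..2 * k} \<Longrightarrow> {2, j} \<in> edges (candle k) \<longleftrightarrow> j \<in> {1, 4, 5}"
  unfolding candle_edge_iff candle_level_def by auto

lemma candle_edge_shift:
  assumes "k \<ge> 2" "i \<in> {1..2 * k}" "j \<in> {1..2 * k}"
  shows "{i + 2, j + 2} \<in> edges (candle (Suc k)) \<longleftrightarrow> {i, j} \<in> edges (candle k)"
proof -
  have "candle_level (Suc k) (t + 2) = candle_level k t + 1" if "t \<in> {1..2 * k}" for t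
    using that assms(1) by (auto simp: candle_level_def)
  then show ?thesis using assms(2,3) by (simp add: candle_edge_iff)
qed

lemma candle_2_edge_iff:
  "{i, j} \<in> edges (candle 2) \<longleftrightarrow> (i \<in> {1, 4} \<and> j \<in> {2, 3}) \<or> (i \<in> {2, 3} \<and> j \<in> {1, 4})"
proof -
  have "{1..2 * 2} = {1, 2, 3, 4 :: nat}" by auto
  then show ?thesis by (auto simp: candle_edge_iff candle_level_def)
qed

locale candle_end = candle_like +
  fixes u v
  assumes u_ne_v: "u \<noteq> v" and nbhd_x: "nbhd G x = {u, v}" and twins_uv: "nbhd G u = nbhd G v"
begin

lemma u_v_verts: "u \<in> verts G" "v \<in> verts G"
  using nbhd_x nbhd_subset_verts[of G x] by auto

lemma x_ne_u_v: "x \<noteq> u" "x \<noteq> v"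
  using nbhd_x not_in_own_nbhd[OF simple, of x] by auto

lemma x_in_nbhd_iff: "x \<in> nbhd G w \<longleftrightarrow> w \<in> {u, v}"
  using nbhd_sym[OF simple, of x w] nbhd_x by simp

lemma other_nbr:
  assumes "r \<in> nbhd G u - {x}"
  shows "r \<in> verts G" "r \<notin> {x, u, v}" "u \<in> nbhd G r" "v \<in> nbhd G r" "nbhd G x \<inter> nbhd G r = {u, v}"
proof -
  show "r \<in> verts G" using assms nbhd_subset_verts[of G u] by blast
  show "u \<in> nbhd G r" "v \<in> nbhd G r" using assms twins_uv nbhd_sym[OF simple, of r] by auto
  then show "r \<notin> {x, u, v}" using assms not_in_own_nbhd[OF simple] by auto
  show "nbhd G x \<inter> nbhd G r = {u, v}" using nbhd_x \<open>u \<in> nbhd G r\<close> \<open>v \<in> nbhd G r\<close> by auto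
qed

text \<open>Two further neighbours of \<open>u\<close> with different neighbourhoods would, together with \<open>x\<close>,
  either give three non-adjacent vertices with common pair \<open>u, v\<close> or three neighbourhood
  classes among the neighbours of \<open>u\<close>.\<close>
lemma other_nbrs_twins:
  assumes r1: "r1 \<in> nbhd G u - {x}" and r2: "r2 \<in> nbhd G u - {x}"
  shows "nbhd G r1 = nbhd G r2"
proof (rule ccontr)
  assume ne: "nbhd G r1 \<noteq> nbhd G r2"
  note r1_props = other_nbr[OF r1] and r2_props = other_nbr[OF r2]
  have "r2 \<notin> nbhd G r1" if "nbhd G x = nbhd G r1 \<or> nbhd G x = nbhd G r2"
    using that nbhd_x r1_props r2_props nbhd_sym[OF simple, of r1 r2] by auto
  moreover have "r1 \<notin> nbhd G x" "r2 \<notin> nbhd G x" using nbhd_x r1_props(2) r2_props(2) by auto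
  moreover have "x \<in> nbhd G u" using x_in_nbhd_iff by simp
  ultimately show False
    using no_common_pair_triple[OF x_vert r1_props(1) r2_props(1), of u v]
      no_three_nbhd_classes[of x u r1 r2] r1 r2 r1_props r2_props u_ne_v ne
    by (cases "nbhd G x = nbhd G r1 \<or> nbhd G x = nbhd G r2") (auto simp: Int_commute)
qed

lemma nbhd_u_cases:
  obtains y where "y \<noteq> x" "nbhd G u = {x, y}"
  | a b where "a \<noteq> b" "a \<noteq> x" "b \<noteq> x" "nbhd G u = {x, a, b}" "nbhd G a = nbhd G b"
proof -
  define R where "R = nbhd G u - {x}"
  have nbhd_u: "nbhd G u = insert x R" using x_in_nbhd_iff R_def by auto
  have R_twins: "nbhd G r1 = nbhd G r2" if "r1 \<in> R" "r2 \<in> R" for r1 r2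
    using other_nbrs_twins that unfolding R_def .
  have "R \<noteq> {}" using degree_ge_2[OF u_v_verts(1)] nbhd_u by auto
  then obtain y where y: "y \<in> R" by blast
  show thesis
  proof (cases "R = {y}")
    case True
    then show thesis using that(1) nbhd_u y R_def by blast
  next
    case False
    then obtain b where b: "b \<in> R" "b \<noteq> y" using y by blast
    have "R = {y, b}"
    proof (rule ccontr)
      assume "R \<noteq> {y, b}"
      then obtain r where "r \<in> R" "r \<noteq> y" "r \<noteq> b" using y b by blast
      then show False
        using no_twin_triple[of y b r] R_twins y b other_nbr(1) unfolding R_def by blast
    qed
    then show thesis using that(2)[of y b] nbhd_u y b R_twins R_def by blast
  qed
qed

lemma short_end:
  assumes "y \<noteq> x" and nbhd_u: "nbhd G u = {x, y}"
  shows "nbhd G y = {u, v}" and "verts G = {x, u, v, y}"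
proof -
  have y: "y \<in> verts G" "u \<in> nbhd G y" "v \<in> nbhd G y"
    using nbhd_u twins_uv nbhd_subset_verts[of G u] nbhd_sym[OF simple, of y] by auto
  show Ny: "nbhd G y = {u, v}"
  proof (cases "\<exists>t\<in>verts G. t \<noteq> y \<and> nbhd G t = nbhd G y")
    case True
    then obtain t where t: "t \<noteq> y" "nbhd G t = nbhd G y" by blast
    then have "t \<in> nbhd G u" using y(2) nbhd_sym[OF simple, of u t] by simp
    then have "t = x" using nbhd_u t(1) by simp
    then show ?thesis using t(2) nbhd_x by simp
  next
    case False
    then have "card (nbhd G y) = 2" using twinless_degree_2[OF y(1)] by metis
    then show ?thesis
      using eq_doubleton_if_card_le_2[OF finite_nbhd[OF simple]] y u_ne_v by simp
  qed
  show "verts G = {x, u, v, y}"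
  proof
    show "{x, u, v, y} \<subseteq> verts G" using x_vert u_v_verts y(1) by simp
    have "reachable G x b \<Longrightarrow> b \<in> {x, u, v, y}" for b
      by (induction rule: rtranclp_induct) (use nbhd_x nbhd_u twins_uv Ny in auto)
    then show "verts G \<subseteq> {x, u, v, y}" using reachable_from_x by blast
  qed
qed

lemma candle_2_map:
  assumes "y \<noteq> x" and nbhd_u: "nbhd G u = {x, y}"
  shows "\<exists>f. candle_map G 2 f \<and> f x = 1"
proof -
  note Ny = short_end(1)[OF assms] and V = short_end(2)[OF assms]
  have distinct: "distinct [x, u, v, y]"
    using assms(1) x_ne_u_v u_ne_v nbhd_u Ny not_in_own_nbhd[OF simple, of y] by auto
  define f where "f w = (if w = x then 1 else if w = u then 2 else if w = v then 3 else 4 :: nat)" for w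
  have f: "f x = 1" "f u = 2" "f v = 3" "f y = 4" using distinct by (auto simp: f_def)
  have "bij_betw f (verts G) {1..2 * 2}"
  proof (rule bij_betw_imageI)
    show "inj_on f (verts G)" unfolding V using f by (auto simp: inj_on_def)
    have "{1..2 * 2} = {1, 2, 3, 4 :: nat}" by auto
    then show "f ` verts G = {1..2 * 2}" unfolding V using f by auto
  qed
  moreover have "{a, b} \<in> edges G \<longleftrightarrow> {f a, f b} \<in> edges (candle 2)"
    if "a \<in> verts G" "b \<in> verts G" for a b
  proof -
    have "{a, b} \<in> edges G \<longleftrightarrow> (a \<in> {x, y} \<and> b \<in> {u, v}) \<or> (a \<in> {u, v} \<and> b \<in> {x, y})"
      using that distinct nbhd_x nbhd_u twins_uv Ny
      unfolding edge_iff_in_nbhd[OF simple] V by auto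
    also have "\<dots> \<longleftrightarrow> {f a, f b} \<in> edges (candle 2)"
      using that distinct f unfolding candle_2_edge_iff V by auto
    finally show ?thesis .
  qed
  ultimately show ?thesis using f unfolding candle_map_def by blast
qed

end

locale candle_peel = candle_end +
  fixes a b
  assumes a_ne_b: "a \<noteq> b" and a_b_ne_x: "a \<noteq> x" "b \<noteq> x"
    and nbhd_u: "nbhd G u = {x, a, b}" and twins_ab: "nbhd G a = nbhd G b"
begin

abbreviation "G' \<equiv> delete_vertex (delete_vertex G x) u"

lemma simple': "simple_graph G'"
  by (intro simple_graph_delete_vertex simple)

lemma verts_G': "verts G' = verts G - {x, u}"
  by (auto simp: verts_delete_vertex)

lemma nbhd_G': "w \<notin> {x, u} \<Longrightarrow> nbhd G' w = nbhd G w - {x, u}"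
  by (auto simp: nbhd_delete_vertex)

lemma x_u_not_in_nbhd_G': "x \<notin> nbhd G' w" "u \<notin> nbhd G' w"
  using nbhd_subset_verts[of G' w] verts_G' by blast+

lemma nbhd_v: "nbhd G v = {x, a, b}"
  using nbhd_u twins_uv by simp

lemma u_in_nbhd_iff: "u \<in> nbhd G w \<longleftrightarrow> w \<in> {x, a, b}"
  using nbhd_sym[OF simple, of u w] nbhd_u by simp

lemma v_in_nbhd_iff: "v \<in> nbhd G w \<longleftrightarrow> w \<in> {x, a, b}"
  using nbhd_sym[OF simple, of v w] nbhd_v by simp

lemma a_b_verts: "a \<in> verts G" "b \<in> verts G" "a \<notin> {u, v}" "b \<notin> {u, v}"
proof -
  have "a \<in> nbhd G u" "b \<in> nbhd G u" "a \<in> nbhd G v" "b \<in> nbhd G v"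
    using nbhd_u nbhd_v by simp_all
  then show "a \<in> verts G" "b \<in> verts G" "a \<notin> {u, v}" "b \<notin> {u, v}"
    using nbhd_subset_verts[of G u] not_in_own_nbhd[OF simple, of u] not_in_own_nbhd[OF simple, of v]
    by auto
qed

lemma verts_G'_iff: "w \<in> verts G' \<longleftrightarrow> w \<in> verts G \<and> w \<notin> {x, u}"
  using verts_G' by auto

lemma in_G': "v \<in> verts G'" "a \<in> verts G'" "b \<in> verts G'"
  using verts_G'_iff u_v_verts a_b_verts x_ne_u_v u_ne_v a_b_ne_x by auto

lemma nbhd_G'_v: "nbhd G' v = {a, b}"
  using nbhd_G'[of v] nbhd_v x_ne_u_v u_ne_v a_b_ne_x a_b_verts by auto

lemma twins_ab': "nbhd G' a = nbhd G' b"
  using nbhd_G' twins_ab a_b_ne_x a_b_verts by auto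

lemma nbhd_G_eq:
  assumes "w \<in> verts G'"
  shows "nbhd G w = nbhd G' w \<union> (if w = v then {x} else {}) \<union> (if w \<in> {a, b} then {u} else {})"
  using assms nbhd_G'[of w] x_in_nbhd_iff[of w] u_in_nbhd_iff[of w] verts_G'_iff u_ne_v
  by auto

lemma v_in_nbhd_G'_iff: "w \<in> verts G' \<Longrightarrow> v \<in> nbhd G' w \<longleftrightarrow> w \<in> {a, b}"
  using nbhd_G'[of w] v_in_nbhd_iff[of w] verts_G'_iff x_ne_u_v u_ne_v by auto

lemma twin_transfer:
  assumes p: "p \<in> verts G'" and s: "s \<in> verts G'" and twins: "nbhd G' p = nbhd G' s"
  shows "nbhd G p = nbhd G s \<or> (p = v \<and> nbhd G s = {a, b}) \<or> (s = v \<and> nbhd G p = {a, b})"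
proof -
  have "s \<notin> {a, b}" if "p = v" "s \<noteq> v"
    using that twins nbhd_G'_v v_in_nbhd_G'_iff[OF s] a_b_verts by auto
  moreover have "p \<notin> {a, b}" if "s = v" "p \<noteq> v"
    using that twins nbhd_G'_v v_in_nbhd_G'_iff[OF p] a_b_verts by auto
  moreover have "p \<in> {a, b} \<longleftrightarrow> s \<in> {a, b}" if "p \<noteq> v" "s \<noteq> v"
    using v_in_nbhd_G'_iff[OF p] v_in_nbhd_G'_iff[OF s] twins by simp
  ultimately show ?thesis
    using nbhd_G_eq[OF p] nbhd_G_eq[OF s] twins nbhd_G'_v by (cases "p = v"; cases "s = v") auto
qed

lemma unique_nbhd_ab:
  assumes "w1 \<in> verts G" "w2 \<in> verts G" "nbhd G w1 = {a, b}" "nbhd G w2 = {a, b}"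
  shows "w1 = w2"
proof (rule ccontr)
  assume "w1 \<noteq> w2"
  have "w \<notin> {x, a, b, u}" if "nbhd G w = {a, b}" for w
    using that nbhd_x nbhd_u a_b_verts a_b_ne_x a_ne_b not_in_own_nbhd[OF simple, of a]
      not_in_own_nbhd[OF simple, of b] by (auto simp: doubleton_eq_iff)
  then show False
    using no_common_pair_triple[OF u_v_verts(1) assms(1,2), of a b] assms \<open>w1 \<noteq> w2\<close> nbhd_u a_ne_b
    by auto
qed

lemma no_twin_triple':
  assumes V: "p \<in> verts G'" "s \<in> verts G'" "r \<in> verts G'" and "p \<noteq> s" "p \<noteq> r" "s \<noteq> r"
    and twins: "nbhd G' s = nbhd G' p" "nbhd G' r = nbhd G' p"
  shows False
proof -
  have nbhd_ab: "nbhd G t = {a, b}" if t: "t \<in> verts G'" "t \<noteq> v" "nbhd G' t = nbhd G' v" for t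
  proof -
    have "nbhd G v \<noteq> nbhd G t"
      using no_twin_triple[of t u v] t twins_uv u_v_verts u_ne_v verts_G'_iff by auto
    then show ?thesis using twin_transfer[OF in_G'(1) t(1) t(3)[symmetric]] t(2) by auto
  qed
  have two_with_nbhd_ab: False
    if "t1 \<in> verts G'" "t2 \<in> verts G'" "t1 \<noteq> t2" "t1 \<noteq> v" "t2 \<noteq> v"
      "nbhd G' t1 = nbhd G' v" "nbhd G' t2 = nbhd G' v" for t1 t2
    using unique_nbhd_ab[of t1 t2] nbhd_ab[of t1] nbhd_ab[of t2] that verts_G'_iff by blast
  show False
  proof (cases "v \<in> {p, s, r}")
    case True
    then consider "p = v" | "s = v" | "r = v" by blast
    then show False
    proof cases
      case 1
      then show False using two_with_nbhd_ab[OF V(2,3) \<open>s \<noteq> r\<close>] assms twins by auto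
    next
      case 2
      then show False using two_with_nbhd_ab[OF V(1,3) \<open>p \<noteq> r\<close>] assms twins by auto
    next
      case 3
      then show False using two_with_nbhd_ab[OF V(1,2) \<open>p \<noteq> s\<close>] assms twins by auto
    qed
  next
    case False
    then have "nbhd G s = nbhd G p" "nbhd G r = nbhd G p"
      using twin_transfer[OF V(2,1) twins(1)] twin_transfer[OF V(3,1) twins(2)] by auto
    then show False using no_twin_triple V assms verts_G'_iff by blast
  qed
qed

lemma no_three_nbhd_classes':
  assumes N: "p \<in> nbhd G' w" "s \<in> nbhd G' w" "r \<in> nbhd G' w"
    and classes: "nbhd G' p \<noteq> nbhd G' s" "nbhd G' p \<noteq> nbhd G' r" "nbhd G' s \<noteq> nbhd G' r"
  shows False
proof -
  have "nbhd G' w \<subseteq> nbhd G w"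
    using nbhd_delete_vertex_subset[of "delete_vertex G x" u w] nbhd_delete_vertex_subset[of G x w]
    by blast
  moreover have "nbhd G' t = nbhd G t - {x, u}" if "t \<in> nbhd G' w" for t
    using that nbhd_subset_verts[of G' w] verts_G'_iff[of t] nbhd_G'[of t] by blast
  ultimately show False
    using no_three_nbhd_classes[of p w s r] N classes by auto
qed

lemma twinless_degree_2':
  assumes p: "p \<in> verts G'" and no_twin: "\<forall>s\<in>verts G'. s \<noteq> p \<longrightarrow> nbhd G' s \<noteq> nbhd G' p"
  shows "card (nbhd G' p) = 2"
proof (cases "p = v")
  case True
  then show ?thesis using nbhd_G'_v a_ne_b by simp
next
  case False
  have "p \<notin> {a, b}" using no_twin in_G' twins_ab' a_ne_b by auto
  have "nbhd G t \<noteq> nbhd G p" if t: "t \<in> verts G" "t \<noteq> p" for t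
  proof
    assume twin: "nbhd G t = nbhd G p"
    consider "t = x" | "t = u" | "t \<in> verts G'" using t verts_G'_iff[of t] by blast
    then show False
    proof cases
      case 1
      then show False using twin nbhd_x u_in_nbhd_iff[of p] \<open>p \<notin> {a, b}\<close> p verts_G'_iff by auto
    next
      case 2
      then have "nbhd G' v = nbhd G' p"
        using twin twins_uv nbhd_G' p in_G' verts_G'_iff by auto
      then show False using no_twin in_G'(1) False by auto
    next
      case 3
      then show False using twin no_twin t nbhd_G' p verts_G'_iff by auto
    qed
  qed
  then have "card (nbhd G p) = 2" using twinless_degree_2 p verts_G'_iff by blast
  moreover have "nbhd G' p = nbhd G p" using nbhd_G_eq[OF p] False \<open>p \<notin> {a, b}\<close> by simp
  ultimately show ?thesis by simp
qed

lemma degree_ge_2':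
  assumes p: "p \<in> verts G'"
  shows "2 \<le> card (nbhd G' p)"
proof -
  consider "p = v" | "p \<in> {a, b}" | "p \<notin> {v, a, b}" by blast
  then show ?thesis
  proof cases
    case 1
    then show ?thesis using nbhd_G'_v a_ne_b by simp
  next
    case 2
    have "{u, v} \<subseteq> nbhd G p" using 2 u_in_nbhd_iff v_in_nbhd_iff by auto
    have "3 \<le> card (nbhd G p)"
    proof (rule ccontr)
      assume "\<not> 3 \<le> card (nbhd G p)"
      then have "nbhd G p = {u, v}"
        using eq_doubleton_if_card_le_2[OF finite_nbhd[OF simple] \<open>{u, v} \<subseteq> nbhd G p\<close> u_ne_v] by simp
      then have "nbhd G a = nbhd G x" "nbhd G b = nbhd G x" using 2 twins_ab nbhd_x by auto
      then show False
        using no_twin_triple[of x a b] x_vert a_b_verts a_b_ne_x a_ne_b by auto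
    qed
    moreover have "nbhd G' p = nbhd G p - {u}"
      using nbhd_G_eq[OF p] 2 x_u_not_in_nbhd_G'[of p] a_b_verts by auto
    ultimately show ?thesis using \<open>{u, v} \<subseteq> nbhd G p\<close> finite_nbhd[OF simple, of p]
      by (simp add: card_Diff_singleton)
  next
    case 3
    then have "nbhd G' p = nbhd G p" using nbhd_G_eq[OF p] by simp
    then show ?thesis using degree_ge_2 p verts_G'_iff by simp
  qed
qed

lemma common_nbhd_G_eq:
  assumes t1: "t1 \<in> verts G'" and t2: "t2 \<in> verts G'" and "t1 \<noteq> t2"
    and "\<not> (t1 \<in> {a, b} \<and> t2 \<in> {a, b})"
  shows "nbhd G t1 \<inter> nbhd G t2 = nbhd G' t1 \<inter> nbhd G' t2"
  using nbhd_G_eq[OF t1] nbhd_G_eq[OF t2] assms(3,4) x_u_not_in_nbhd_G'[of t1] x_u_not_in_nbhd_G'[of t2]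
    x_ne_u_v(1) by auto

lemma no_common_pair_triple':
  assumes V: "p \<in> verts G'" "s \<in> verts G'" "r \<in> verts G'" and distinct: "p \<noteq> s" "p \<noteq> r" "s \<noteq> r"
    and indep: "s \<notin> nbhd G' p" "r \<notin> nbhd G' p" "r \<notin> nbhd G' s" and "c \<noteq> d"
    and ps: "nbhd G' p \<inter> nbhd G' s = {c, d}" and pr: "nbhd G' p \<inter> nbhd G' r = {c, d}"
    and sr: "nbhd G' s \<inter> nbhd G' r = {c, d}"
  shows False
proof -
  have "v \<notin> {c, d}"
  proof
    assume "v \<in> {c, d}"
    then have "p \<in> {a, b}" "s \<in> {a, b}" "r \<in> {a, b}"
      using ps pr v_in_nbhd_G'_iff V by blast+
    then show False using distinct by auto
  qed
  then have not_both: "\<not> (t1 \<in> {a, b} \<and> t2 \<in> {a, b})"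
    if "t1 \<in> verts G'" "t2 \<in> verts G'" "nbhd G' t1 \<inter> nbhd G' t2 = {c, d}" for t1 t2
    using that v_in_nbhd_G'_iff by blast
  have "nbhd G p \<inter> nbhd G s = {c, d}" "nbhd G p \<inter> nbhd G r = {c, d}" "nbhd G s \<inter> nbhd G r = {c, d}"
    using common_nbhd_G_eq not_both V distinct ps pr sr by simp_all
  moreover have "s \<notin> nbhd G p" "r \<notin> nbhd G p" "r \<notin> nbhd G s"
    using indep V nbhd_G' verts_G'_iff by auto
  ultimately show False
    using no_common_pair_triple[of p s r d c] \<open>c \<noteq> d\<close> V distinct verts_G'_iff by auto
qed

lemma reachable_from_v':
  assumes "w \<in> verts G'"
  shows "reachable G' v w"
proof -
  have "reachable G x w" using reachable_from_x assms verts_G'_iff by blast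
  then have "w \<in> {x, u} \<or> reachable G' v w"
  proof (induction rule: rtranclp_induct)
    case (step s t)
    consider "t \<in> {x, u}" | "s = x" | "s = u" | "t \<notin> {x, u}" "s \<notin> {x, u}" by blast
    then show ?case
    proof cases
      case 2
      then show ?thesis using step.hyps(2) nbhd_x by auto
    next
      case 3
      then have "t \<in> {x} \<or> t \<in> nbhd G' v" using step.hyps(2) nbhd_u nbhd_G'_v by auto
      then show ?thesis by auto
    next
      case 4
      then have "t \<in> nbhd G' s" using step.hyps(2) nbhd_G' by auto
      then show ?thesis using step.IH 4 by (auto intro: rtranclp.rtrancl_into_rtrancl)
    qed simp
  qed simp
  then show ?thesis using assms verts_G'_iff by blast
qed

lemma candle_like': "candle_like G' v"
proof
  show "twin_pair G' (nbhd G' v)"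
    unfolding nbhd_G'_v by (rule twin_pairI[OF a_ne_b twins_ab'])
qed (fact simple' in_G'(1) no_twin_triple' no_three_nbhd_classes' twinless_degree_2' degree_ge_2'
  no_common_pair_triple' reachable_from_v')+

end

locale candle_extension = candle_peel +
  fixes k f'
  assumes k_ge_2: "k \<ge> 2" and map': "candle_map G' k f'" and label_v: "f' v = 1"
begin

definition label :: "'a \<Rightarrow> nat" where
  "label w = (if w = x then 1 else if w = u then 2 else f' w + 2)"

lemma bij': "bij_betw f' (verts G') {1..2 * k}"
  using map' by (simp add: candle_map_def)

lemma label'_range: "t \<in> verts G' \<Longrightarrow> f' t \<in> {1..2 * k}"
  using bij' by (auto simp: bij_betw_def)

lemma edge_iff_label':
  assumes p: "p \<in> verts G'" and r: "r \<in> verts G'"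
  shows "{p, r} \<in> edges G \<longleftrightarrow> {f' p, f' r} \<in> edges (candle k)"
proof -
  have "{p, r} \<in> edges G \<longleftrightarrow> r \<in> nbhd G p" by (rule edge_iff_in_nbhd[OF simple])
  also have "\<dots> \<longleftrightarrow> r \<in> nbhd G' p" using nbhd_G'[of p] p r verts_G'_iff by auto
  also have "\<dots> \<longleftrightarrow> {p, r} \<in> edges G'" by (rule edge_iff_in_nbhd[OF simple', symmetric])
  also have "\<dots> \<longleftrightarrow> {f' p, f' r} \<in> edges (candle k)" using map' p r unfolding candle_map_def by blast
  finally show ?thesis .
qed

lemma label'_eq_1_iff: "t \<in> verts G' \<Longrightarrow> f' t = 1 \<longleftrightarrow> t = v"
  using bij' in_G'(1) label_v by (auto simp: bij_betw_def inj_on_def)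

lemma label'_2_3_iff:
  assumes t: "t \<in> verts G'"
  shows "f' t \<in> {2, 3} \<longleftrightarrow> t \<in> {a, b}"
proof -
  have "{v, a} \<in> edges G" "{v, b} \<in> edges G"
    using nbhd_v edge_iff_in_nbhd[OF simple, of v] by auto
  then have "f' a \<in> {2, 3}" "f' b \<in> {2, 3}"
    using edge_iff_label' in_G' label_v candle_edge_1[OF k_ge_2] label'_range by auto
  moreover have "f' a \<noteq> f' b" using bij' in_G' a_ne_b by (auto simp: bij_betw_def inj_on_def)
  ultimately have "f' t \<in> {2, 3} \<longleftrightarrow> f' t \<in> {f' a, f' b}" by auto
  also have "\<dots> \<longleftrightarrow> t \<in> {a, b}" using bij' t in_G' by (auto simp: bij_betw_def inj_on_def)
  finally show ?thesis .
qed

lemma bij_label: "bij_betw label (verts G) {1..2 * Suc k}"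
proof -
  have "bij_betw (\<lambda>w. if w = x then 1 else 2) {x, u} {1, 2 :: nat}"
    using x_ne_u_v(1) by (auto simp: bij_betw_def inj_on_def)
  moreover have "(\<lambda>n. n + 2) ` {1..2 * k} = {3..2 * Suc k}"
    by (simp only: image_add_atLeastAtMost') simp
  then have "bij_betw (\<lambda>n. n + 2) {1..2 * k} {3..2 * Suc k}"
    by (simp add: bij_betw_def inj_on_def)
  then have "bij_betw (\<lambda>w. f' w + 2) (verts G') {3..2 * Suc k}"
    using bij_betw_trans[OF bij'] by (simp add: comp_def)
  ultimately have bij: "bij_betw (\<lambda>w. if w \<in> {x, u} then (if w = x then 1 else 2) else f' w + 2)
      ({x, u} \<union> verts G') ({1, 2} \<union> {3..2 * Suc k})"
    by (rule bij_betw_disjoint_Un) (auto simp: verts_G')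
  have "(\<lambda>w. if w \<in> {x, u} then (if w = x then 1 else 2) else f' w + 2) = label"
    by (auto simp: label_def)
  moreover have "{x, u} \<union> verts G' = verts G" using x_vert u_v_verts verts_G' by auto
  moreover have "{1, 2} \<union> {3..2 * Suc k} = {1..2 * Suc k}" by auto
  ultimately show ?thesis using bij by simp
qed

lemma label_range: "w \<in> verts G \<Longrightarrow> label w \<in> {1..2 * Suc k}"
  using bij_label by (auto simp: bij_betw_def)

lemma label_cases:
  assumes "w \<in> verts G"
  obtains "w = x" "label w = 1" | "w = u" "label w = 2" | "w \<in> verts G'" "label w = f' w + 2"
  using assms x_ne_u_v(1) verts_G'_iff[of w] by (auto simp: label_def)

lemma label_edge_x:
  assumes w: "w \<in> verts G"
  shows "{x, w} \<in> edges G \<longleftrightarrow> {label x, label w} \<in> edges (candle (Suc k))"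
proof -
  have "{x, w} \<in> edges G \<longleftrightarrow> w \<in> {u, v}" using edge_iff_in_nbhd[OF simple] nbhd_x by simp
  also have "\<dots> \<longleftrightarrow> label w \<in> {2, 3}"
  proof (cases rule: label_cases[OF w])
    case 3
    then have "w \<noteq> u" "f' w \<noteq> 0" using verts_G'_iff label'_range[of w] by auto
    then show ?thesis using 3 label'_eq_1_iff[of w] by auto
  qed (use x_ne_u_v in simp_all)
  also have "\<dots> \<longleftrightarrow> {label x, label w} \<in> edges (candle (Suc k))"
    using candle_edge_1 k_ge_2 label_range[OF w] by (simp add: label_def)
  finally show ?thesis .
qed

lemma label_edge_u:
  assumes w: "w \<in> verts G"
  shows "{u, w} \<in> edges G \<longleftrightarrow> {label u, label w} \<in> edges (candle (Suc k))"
proof -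
  have "{u, w} \<in> edges G \<longleftrightarrow> w \<in> {x, a, b}" using edge_iff_in_nbhd[OF simple] nbhd_u by simp
  also have "\<dots> \<longleftrightarrow> label w \<in> {1, 4, 5}"
  proof (cases rule: label_cases[OF w])
    case 3
    then have "w \<noteq> x" using verts_G'_iff by auto
    then show ?thesis using 3 label'_2_3_iff[of w] by auto
  qed (use a_b_verts x_ne_u_v in auto)
  also have "\<dots> \<longleftrightarrow> {label u, label w} \<in> edges (candle (Suc k))"
    using candle_edge_2 k_ge_2 label_range[OF w] x_ne_u_v by (simp add: label_def)
  finally show ?thesis .
qed

lemma candle_map_label: "candle_map G (Suc k) label"
  unfolding candle_map_def
proof (intro conjI bij_label ballI)
  fix p r assume p: "p \<in> verts G" and r: "r \<in> verts G"
  show "{p, r} \<in> edges G \<longleftrightarrow> {label p, label r} \<in> edges (candle (Suc k))"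
  proof (cases rule: label_cases[OF p])
    case p': 3
    show ?thesis
    proof (cases rule: label_cases[OF r])
      case 3
      then show ?thesis
        using p' edge_iff_label' candle_edge_shift[OF k_ge_2] label'_range by simp
    qed (use label_edge_x[OF p] label_edge_u[OF p] in \<open>simp_all add: insert_commute\<close>)
  qed (use label_edge_x[OF r] label_edge_u[OF r] in simp_all)
qed

end

lemma candle_like_candle_map:
  assumes "candle_like G x"
  shows "\<exists>k\<ge>2. \<exists>f. candle_map G k f \<and> f x = 1"
  using assms
proof (induction "card (verts G)" arbitrary: G x rule: less_induct)
  case less
  interpret candle_like G x by (fact less.prems)
  obtain u v where "u \<noteq> v" "nbhd G x = {u, v}" "nbhd G u = nbhd G v"
    using x_twin_pair unfolding twin_pair_def by blast
  then interpret candle_end G x u v by unfold_locales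
  show ?case
  proof (cases rule: nbhd_u_cases)
    case (1 y)
    then show ?thesis using candle_2_map by blast
  next
    case (2 a b)
    then interpret candle_peel G x u v a b by unfold_locales
    have "verts G' \<subset> verts G" using verts_G' x_vert by auto
    then have "card (verts G') < card (verts G)" by (rule psubset_card_mono[OF finite_verts[OF simple]])
    then obtain k f' where "k \<ge> 2" "candle_map G' k f'" "f' v = 1"
      using less.hyps candle_like' by blast
    then interpret candle_extension G x u v a b k f' by unfold_locales
    have "label x = 1" by (simp add: label_def)
    then show ?thesis using candle_map_label k_ge_2 by (intro exI[of _ "Suc k"]) auto
  qed
qed

theorem mainTheorem13:
  fixes G :: "'a graph"
  assumes "simple_graph G"
    and "\<exists>H. condensation H G \<and> graph_iso H cycle4"
    and "q G = 2"
  shows "double_ended_candle G"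
proof -
  have "C4_condensed G" using C4_condensed_if_condensation assms(1,2) by blast
  moreover obtain A where "q2_matrix G A" using q2_matrix_exists[OF assms(1,3)] .
  ultimately have "C4_condensed_q2 G A" by (intro C4_condensed_q2.intro)
  then obtain x where "candle_like G x" using C4_condensed_q2.candle_like_exists by blast
  then obtain k f where "k \<ge> 2" "candle_map G k f" using candle_like_candle_map by meson
  then show ?thesis unfolding double_ended_candle_def using graph_iso_candle by blast
qed

end
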